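(* Fix $\tau$ with $0<\tau\le\frac1{8d^2}$ and a slack vector $\nu$ with $\|\nu\|_\infty\le\frac1{4d}$. (1) If $\Gamma\in\mathbb L_2^\nu$, then there exists $\Gamma'\in\mathbb L_2$ such that $\Gamma'_i(x_i)\ge\tau$ for all $i\in\mathcal V$, $x_i\in\chi$, $\Gamma'_{ij}(x_i,x_j)\ge\tau$ for all $ij\in\mathcal E$, $x_i,x_j\in\chi$, and $\|\Gamma-\Gamma'\|_1\le2\|\nu\|_1+2(|\mathcal E|+n)d^2\tau$. (2) If $\Gamma\in\mathbb L_2$, then there exists $\Gamma'\in\mathbb L_2^\nu$ such that $\Gamma'_i(x_i)\ge\tau$ for all $i,x_i$, $\Gamma'_{ij}(x_i,x_j)\ge\tau$ for all $ij,x_i,x_j$, and $\|\Gamma-\Gamma'\|_1\le6d\deg(G)\|\nu\|_1+8(|\mathcal E|+n)d^2\tau$.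
   Context: Let $G=(\mathcal V,\mathcal E)$ be a graph with $\mathcal V=\{1,\dots,n\}$, edges ordered pairs $ij$, maximum degree $\deg(G)$, and $\chi=\{0,\dots,d-1\}$; $\Sigma_d$ is the probability simplex in $\mathbb R^d$ and $\mathbb 1$ the all-ones vector. A marginal vector $\Gamma$ consists of $\Gamma_i\in\mathbb R^d$ ($i\in\mathcal V$) and $\Gamma_{ij}\in\mathbb R^{d\times d}$ ($ij\in\mathcal E$); $\|\cdot\|_1$ is the sum of absolute values of all entries and $\|\cdot\|_\infty$ the maximum absolute entry. A slack vector $\nu$ consists of vectors $\nu_{ij},\nu_{ji}\in\mathbb R^d$ for each $ij\in\mathcal E$ with $\nu_{ij}^\top\mathbb 1=\nu_{ji}^\top\mathbb 1=0$. The slack polytope is $\mathbb L_2^\nu=\{\Gamma\ge0:\Gamma_i\in\Sigma_d\ \forall i;\ \Gamma_{ij}\mathbb 1=\Gamma_i+\nu_{ij},\ \Gamma_{ij}^\top\mathbb 1=\Gamma_j+\nu_{ji},\ \mathbb 1^\top\Gamma_{ij}\mathbb 1=1\ \forall ij\in\mathcal E\}$; $\mathbb L_2=\mathbb L_2^0$. *)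

theory Defs
  imports Complex_Main
begin

text \<open>Graph G = (V, E) with V = {1..n}; edges are ordered pairs (i,j); states chi = {0..<d}.
  A marginal vector is a pair (Gv, Ge): Gv i x = Gamma_i(x), Ge i j x y = Gamma_ij(x,y).
  A slack vector is nu with nu i j = nu_ij and nu j i = nu_ji for (i,j) in E.\<close>

definition simple_graph :: "nat \<Rightarrow> (nat \<times> nat) set \<Rightarrow> bool" where
  "simple_graph n E \<longleftrightarrow> E \<subseteq> {1..n} \<times> {1..n} \<and> (\<forall>(i,j)\<in>E. i \<noteq> j \<and> (j,i) \<notin> E)"

definition degree :: "(nat \<times> nat) set \<Rightarrow> nat \<Rightarrow> nat" where
  "degree E i = card {j. (i,j) \<in> E \<or> (j,i) \<in> E}"

definition max_degree :: "nat \<Rightarrow> (nat \<times> nat) set \<Rightarrow> nat" where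
  "max_degree n E = Max (degree E ` {1..n})"

definition in_simplex :: "nat \<Rightarrow> (nat \<Rightarrow> real) \<Rightarrow> bool" where
  "in_simplex d p \<longleftrightarrow> (\<forall>x<d. 0 \<le> p x) \<and> (\<Sum>x<d. p x) = 1"

definition slack_vector :: "(nat \<times> nat) set \<Rightarrow> nat \<Rightarrow> (nat \<Rightarrow> nat \<Rightarrow> nat \<Rightarrow> real) \<Rightarrow> bool" where
  "slack_vector E d \<nu> \<longleftrightarrow> (\<forall>(i,j)\<in>E. (\<Sum>x<d. \<nu> i j x) = 0 \<and> (\<Sum>x<d. \<nu> j i x) = 0)"

definition slack_norm1 :: "(nat \<times> nat) set \<Rightarrow> nat \<Rightarrow> (nat \<Rightarrow> nat \<Rightarrow> nat \<Rightarrow> real) \<Rightarrow> real" where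
  "slack_norm1 E d \<nu> = (\<Sum>(i,j)\<in>E. \<Sum>x<d. \<bar>\<nu> i j x\<bar> + \<bar>\<nu> j i x\<bar>)"

definition in_L2nu :: "nat \<Rightarrow> (nat \<times> nat) set \<Rightarrow> nat \<Rightarrow> (nat \<Rightarrow> nat \<Rightarrow> nat \<Rightarrow> real)
    \<Rightarrow> (nat \<Rightarrow> nat \<Rightarrow> real) \<Rightarrow> (nat \<Rightarrow> nat \<Rightarrow> nat \<Rightarrow> nat \<Rightarrow> real) \<Rightarrow> bool" where
  "in_L2nu n E d \<nu> Gv Ge \<longleftrightarrow>
     (\<forall>i\<in>{1..n}. in_simplex d (Gv i)) \<and>
     (\<forall>(i,j)\<in>E. (\<forall>x<d. \<forall>y<d. 0 \<le> Ge i j x y) \<and>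
        (\<forall>x<d. (\<Sum>y<d. Ge i j x y) = Gv i x + \<nu> i j x) \<and>
        (\<forall>y<d. (\<Sum>x<d. Ge i j x y) = Gv j y + \<nu> j i y) \<and>
        (\<Sum>x<d. \<Sum>y<d. Ge i j x y) = 1)"

definition in_L2 :: "nat \<Rightarrow> (nat \<times> nat) set \<Rightarrow> nat
    \<Rightarrow> (nat \<Rightarrow> nat \<Rightarrow> real) \<Rightarrow> (nat \<Rightarrow> nat \<Rightarrow> nat \<Rightarrow> nat \<Rightarrow> real) \<Rightarrow> bool" where
  "in_L2 n E d Gv Ge \<longleftrightarrow> in_L2nu n E d (\<lambda>_ _ _. 0) Gv Ge"

definition marg_dist1 :: "nat \<Rightarrow> (nat \<times> nat) set \<Rightarrow> nat
    \<Rightarrow> (nat \<Rightarrow> nat \<Rightarrow> real) \<Rightarrow> (nat \<Rightarrow> nat \<Rightarrow> nat \<Rightarrow> nat \<Rightarrow> real)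
    \<Rightarrow> (nat \<Rightarrow> nat \<Rightarrow> real) \<Rightarrow> (nat \<Rightarrow> nat \<Rightarrow> nat \<Rightarrow> nat \<Rightarrow> real) \<Rightarrow> real" where
  "marg_dist1 n E d Gv Ge Gv' Ge' =
     (\<Sum>i\<in>{1..n}. \<Sum>x<d. \<bar>Gv i x - Gv' i x\<bar>) +
     (\<Sum>(i,j)\<in>E. \<Sum>x<d. \<Sum>y<d. \<bar>Ge i j x y - Ge' i j x y\<bar>)"

definition lower_bounded :: "nat \<Rightarrow> (nat \<times> nat) set \<Rightarrow> nat \<Rightarrow> real
    \<Rightarrow> (nat \<Rightarrow> nat \<Rightarrow> real) \<Rightarrow> (nat \<Rightarrow> nat \<Rightarrow> nat \<Rightarrow> nat \<Rightarrow> real) \<Rightarrow> bool" where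
  "lower_bounded n E d \<tau> Gv Ge \<longleftrightarrow>
     (\<forall>i\<in>{1..n}. \<forall>x<d. \<tau> \<le> Gv i x) \<and> (\<forall>(i,j)\<in>E. \<forall>x<d. \<forall>y<d. \<tau> \<le> Ge i j x y)"

end

theory Submission
  imports Defs
begin

(* Everything is built from cheap moves on marginal vectors, measured in the l1 distance.
   Changing the slack: on each edge a nonnegative matrix with marginals a, b is repaired into
   one with marginals a', b' at cost 2 (|a - a'|_1 + |b - b'|_1), by shrinking its rows and
   columns with the factors min (1, a'/a) and min (1, b'/b) and refilling the missing mass
   with the outer product of the residual marginals.
   Mixing with the uniform marginal vector with weight l costs 2 l per vertex and per edge,
   multiplies the slack by 1 - l, and makes every entry at least l / d^2.
   Part (1) removes the slack and then mixes with l = d^2 tau. Part (2) introduces the slack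
   nu / (1 - l) for l = 4 d^2 tau and mixes it back to nu; this requires Gamma_i >= 2 |nu_ij|,
   which is arranged first by raising each vertex marginal by twice the largest slack on its
   incident edges. That costs 4 (1 + deg G) |nu|_1, which is where the degree enters. *)

section \<open>Transport plans\<close>

definition transport_plan ::
    "'a set \<Rightarrow> 'b set \<Rightarrow> ('a \<Rightarrow> 'b \<Rightarrow> real) \<Rightarrow> ('a \<Rightarrow> real) \<Rightarrow> ('b \<Rightarrow> real) \<Rightarrow> bool" where
  "transport_plan X Y P a b \<longleftrightarrow> (\<forall>x\<in>X. \<forall>y\<in>Y. 0 \<le> P x y) \<and>
     (\<forall>x\<in>X. (\<Sum>y\<in>Y. P x y) = a x) \<and> (\<forall>y\<in>Y. (\<Sum>x\<in>X. P x y) = b y)"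

lemma transport_plan_transpose:
  "transport_plan Y X (\<lambda>y x. P x y) b a \<longleftrightarrow> transport_plan X Y P a b"
  by (auto simp: transport_plan_def)

lemma transport_plan_cong:
  assumes "transport_plan X Y P a b"
    and "\<And>x. x \<in> X \<Longrightarrow> a x = a' x" and "\<And>y. y \<in> Y \<Longrightarrow> b y = b' y"
  shows "transport_plan X Y P a' b'"
  using assms by (simp add: transport_plan_def)

lemma transport_plan_marginal_nonneg:
  assumes "transport_plan X Y P a b"
  shows "x \<in> X \<Longrightarrow> 0 \<le> a x" and "y \<in> Y \<Longrightarrow> 0 \<le> b y"
  using assms unfolding transport_plan_def by (metis sum_nonneg)+

lemma transport_plan_mass:
  assumes "transport_plan X Y P a b"
  shows "(\<Sum>x\<in>X. \<Sum>y\<in>Y. P x y) = sum a X" and "(\<Sum>x\<in>X. \<Sum>y\<in>Y. P x y) = sum b Y"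
proof -
  show "(\<Sum>x\<in>X. \<Sum>y\<in>Y. P x y) = sum a X"
    using assms by (simp add: transport_plan_def)
  have "(\<Sum>x\<in>X. \<Sum>y\<in>Y. P x y) = (\<Sum>y\<in>Y. \<Sum>x\<in>X. P x y)"
    by (rule sum.swap)
  then show "(\<Sum>x\<in>X. \<Sum>y\<in>Y. P x y) = sum b Y"
    using assms by (simp add: transport_plan_def)
qed

lemma transport_plan_add:
  assumes "transport_plan X Y P a b" and "transport_plan X Y P' a' b'"
  shows "transport_plan X Y (\<lambda>x y. P x y + P' x y) (\<lambda>x. a x + a' x) (\<lambda>y. b y + b' y)"
  using assms by (simp add: transport_plan_def sum.distrib)

lemma transport_plan_scale:
  assumes "transport_plan X Y P a b" and "0 \<le> c"
  shows "transport_plan X Y (\<lambda>x y. c * P x y) (\<lambda>x. c * a x) (\<lambda>y. c * b y)"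
  using assms by (simp add: transport_plan_def sum_distrib_left[symmetric])

lemma transport_plan_const:
  assumes "0 \<le> c"
  shows "transport_plan X Y (\<lambda>_ _. c) (\<lambda>_. c * real (card Y)) (\<lambda>_. c * real (card X))"
  using assms by (simp add: transport_plan_def)

lemma transport_plan_product:
  assumes "\<forall>x\<in>X. 0 \<le> u x" and "\<forall>y\<in>Y. 0 \<le> v y"
  shows "transport_plan X Y (\<lambda>x y. u x * v y) (\<lambda>x. u x * sum v Y) (\<lambda>y. sum u X * v y)"
  using assms by (simp add: transport_plan_def sum_distrib_left sum_distrib_right)

lemma transport_plan_outer:
  assumes "finite X" "finite Y" and u: "\<forall>x\<in>X. 0 \<le> u x" and v: "\<forall>y\<in>Y. 0 \<le> v y"
    and "sum u X = D" and "sum v Y = D"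
  shows "transport_plan X Y (\<lambda>x y. u x * v y / D) u v"
proof (cases "D = 0")
  case True
  \<comment> \<open>then both marginals vanish, so the junk value of the division does no harm\<close>
  then have "\<forall>x\<in>X. u x = 0" "\<forall>y\<in>Y. v y = 0"
    using assms by (simp_all add: sum_nonneg_eq_0_iff)
  then show ?thesis using True by (simp add: transport_plan_def)
next
  case False
  have "0 \<le> D" using u \<open>sum u X = D\<close> sum_nonneg by metis
  have "transport_plan X Y (\<lambda>x y. 1 / D * (u x * v y))
      (\<lambda>x. 1 / D * (u x * D)) (\<lambda>y. 1 / D * (D * v y))"
    using transport_plan_scale[OF transport_plan_product[OF u v], of "1 / D"] assms \<open>0 \<le> D\<close>
    by simp
  then show ?thesis using False by simp
qed

lemma transport_plan_completion:
  assumes "finite X" "finite Y" and S: "\<forall>x\<in>X. \<forall>y\<in>Y. 0 \<le> S x y"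
    and rows: "\<forall>x\<in>X. (\<Sum>y\<in>Y. S x y) \<le> a x" and cols: "\<forall>y\<in>Y. (\<Sum>x\<in>X. S x y) \<le> b y"
    and mass: "sum a X = sum b Y"
  obtains Q where "transport_plan X Y Q a b" and "\<forall>x\<in>X. \<forall>y\<in>Y. S x y \<le> Q x y"
proof -
  define u where "u x = a x - (\<Sum>y\<in>Y. S x y)" for x
  define v where "v y = b y - (\<Sum>x\<in>X. S x y)" for y
  define D where "D = sum a X - (\<Sum>x\<in>X. \<Sum>y\<in>Y. S x y)"
  have u: "\<forall>x\<in>X. 0 \<le> u x" and v: "\<forall>y\<in>Y. 0 \<le> v y"
    using rows cols by (simp_all add: u_def v_def)
  have uD: "sum u X = D" by (simp add: u_def D_def sum_subtractf)
  have vD: "sum v Y = D" using mass by (simp add: v_def D_def sum_subtractf sum.swap[of _ Y])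
  have "0 \<le> D" using u uD sum_nonneg by metis
  have "transport_plan X Y S (\<lambda>x. \<Sum>y\<in>Y. S x y) (\<lambda>y. \<Sum>x\<in>X. S x y)"
    using S by (simp add: transport_plan_def)
  from transport_plan_add[OF this transport_plan_outer[OF assms(1,2) u v uD vD]]
  have "transport_plan X Y (\<lambda>x y. S x y + u x * v y / D) a b"
    by (simp add: u_def v_def)
  moreover have "\<forall>x\<in>X. \<forall>y\<in>Y. S x y \<le> S x y + u x * v y / D"
    using u v \<open>0 \<le> D\<close> by simp
  ultimately show thesis by (rule that)
qed

lemma shrink_factor:
  fixes a a' :: real
  assumes "0 \<le> a'"
  shows "\<exists>t. 0 \<le> t \<and> t \<le> 1 \<and> t * a \<le> a' \<and> a * (1 - t) \<le> \<bar>a - a'\<bar>"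
proof (cases "a \<le> a'")
  case True
  then show ?thesis by (intro exI[of _ 1]) auto
next
  case False
  with assms have "0 < a" by linarith
  with False assms show ?thesis by (intro exI[of _ "a' / a"]) (auto simp: field_simps)
qed

lemma transport_plan_shrink:
  assumes P: "transport_plan X Y P a b"
    and \<alpha>: "\<forall>x\<in>X. 0 \<le> \<alpha> x \<and> \<alpha> x \<le> 1" and \<beta>: "\<forall>y\<in>Y. 0 \<le> \<beta> y \<and> \<beta> y \<le> 1"
  shows "\<forall>x\<in>X. \<forall>y\<in>Y. 0 \<le> \<alpha> x * \<beta> y * P x y \<and> \<alpha> x * \<beta> y * P x y \<le> P x y"
    and "\<forall>x\<in>X. (\<Sum>y\<in>Y. \<alpha> x * \<beta> y * P x y) \<le> \<alpha> x * a x"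
    and "\<forall>y\<in>Y. (\<Sum>x\<in>X. \<alpha> x * \<beta> y * P x y) \<le> \<beta> y * b y"
proof -
  have pointwise: "0 \<le> \<alpha> x * \<beta> y * P x y" "\<alpha> x * \<beta> y * P x y \<le> \<alpha> x * P x y"
    "\<alpha> x * \<beta> y * P x y \<le> \<beta> y * P x y" "\<alpha> x * P x y \<le> P x y"
    if "x \<in> X" "y \<in> Y" for x y
  proof -
    have "0 \<le> P x y" "0 \<le> \<alpha> x" "\<alpha> x \<le> 1" "0 \<le> \<beta> y" "\<beta> y \<le> 1"
      using that P \<alpha> \<beta> by (auto simp: transport_plan_def)
    then show "0 \<le> \<alpha> x * \<beta> y * P x y" "\<alpha> x * \<beta> y * P x y \<le> \<alpha> x * P x y"
      "\<alpha> x * \<beta> y * P x y \<le> \<beta> y * P x y" "\<alpha> x * P x y \<le> P x y"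
      using mult_right_le_one_le[of "\<alpha> x * P x y" "\<beta> y"]
        mult_right_le_one_le[of "\<beta> y * P x y" "\<alpha> x"]
        mult_left_le_one_le[of "P x y" "\<alpha> x"]
      by (simp_all add: ac_simps)
  qed
  show "\<forall>x\<in>X. \<forall>y\<in>Y. 0 \<le> \<alpha> x * \<beta> y * P x y \<and> \<alpha> x * \<beta> y * P x y \<le> P x y"
  proof (intro ballI conjI)
    fix x y assume "x \<in> X" "y \<in> Y"
    from pointwise[OF this] show "0 \<le> \<alpha> x * \<beta> y * P x y" "\<alpha> x * \<beta> y * P x y \<le> P x y"
      by linarith+
  qed
  show "\<forall>x\<in>X. (\<Sum>y\<in>Y. \<alpha> x * \<beta> y * P x y) \<le> \<alpha> x * a x"
  proof
    fix x assume "x \<in> X"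
    then have "(\<Sum>y\<in>Y. \<alpha> x * \<beta> y * P x y) \<le> (\<Sum>y\<in>Y. \<alpha> x * P x y)"
      using pointwise by (intro sum_mono) auto
    then show "(\<Sum>y\<in>Y. \<alpha> x * \<beta> y * P x y) \<le> \<alpha> x * a x"
      using \<open>x \<in> X\<close> P by (simp add: sum_distrib_left[symmetric] transport_plan_def)
  qed
  show "\<forall>y\<in>Y. (\<Sum>x\<in>X. \<alpha> x * \<beta> y * P x y) \<le> \<beta> y * b y"
  proof
    fix y assume "y \<in> Y"
    then have "(\<Sum>x\<in>X. \<alpha> x * \<beta> y * P x y) \<le> (\<Sum>x\<in>X. \<beta> y * P x y)"
      using pointwise by (intro sum_mono) auto
    then show "(\<Sum>x\<in>X. \<alpha> x * \<beta> y * P x y) \<le> \<beta> y * b y"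
      using \<open>y \<in> Y\<close> P by (simp add: sum_distrib_left[symmetric] transport_plan_def)
  qed
qed

lemma transport_plan_shrink_loss:
  assumes P: "transport_plan X Y P a b"
    and \<alpha>: "\<forall>x\<in>X. 0 \<le> \<alpha> x \<and> \<alpha> x \<le> 1" and \<beta>: "\<forall>y\<in>Y. 0 \<le> \<beta> y \<and> \<beta> y \<le> 1"
  shows "(\<Sum>x\<in>X. \<Sum>y\<in>Y. P x y * (1 - \<alpha> x * \<beta> y))
    \<le> (\<Sum>x\<in>X. a x * (1 - \<alpha> x)) + (\<Sum>y\<in>Y. b y * (1 - \<beta> y))"
proof -
  have "(\<Sum>x\<in>X. \<Sum>y\<in>Y. P x y * (1 - \<alpha> x * \<beta> y))
      \<le> (\<Sum>x\<in>X. \<Sum>y\<in>Y. P x y * (1 - \<alpha> x) + P x y * (1 - \<beta> y))"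
  proof (intro sum_mono)
    fix x y assume "x \<in> X" "y \<in> Y"
    then have "0 \<le> P x y" "0 \<le> (1 - \<alpha> x) * (1 - \<beta> y)"
      using P \<alpha> \<beta> by (auto simp: transport_plan_def)
    then have "P x y * (1 - \<alpha> x * \<beta> y) \<le> P x y * ((1 - \<alpha> x) + (1 - \<beta> y))"
      by (intro mult_left_mono) (auto simp: algebra_simps)
    then show "P x y * (1 - \<alpha> x * \<beta> y) \<le> P x y * (1 - \<alpha> x) + P x y * (1 - \<beta> y)"
      by (simp add: algebra_simps)
  qed
  also have "\<dots> = (\<Sum>x\<in>X. \<Sum>y\<in>Y. P x y * (1 - \<alpha> x)) + (\<Sum>y\<in>Y. \<Sum>x\<in>X. P x y * (1 - \<beta> y))"
    by (simp add: sum.distrib sum.swap[of "\<lambda>x y. P x y * (1 - \<beta> y)"])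
  also have "\<dots> = (\<Sum>x\<in>X. a x * (1 - \<alpha> x)) + (\<Sum>y\<in>Y. b y * (1 - \<beta> y))"
    using P by (simp add: sum_distrib_right[symmetric] transport_plan_def)
  finally show ?thesis .
qed

lemma transport_plan_repair:
  assumes fin: "finite X" "finite Y" and P: "transport_plan X Y P a b"
    and a': "\<forall>x\<in>X. 0 \<le> a' x" and b': "\<forall>y\<in>Y. 0 \<le> b' y"
    and mass: "sum a' X = sum a X" "sum b' Y = sum a X"
  obtains Q where "transport_plan X Y Q a' b'"
    and "(\<Sum>x\<in>X. \<Sum>y\<in>Y. \<bar>P x y - Q x y\<bar>)
           \<le> 2 * ((\<Sum>x\<in>X. \<bar>a x - a' x\<bar>) + (\<Sum>y\<in>Y. \<bar>b y - b' y\<bar>))"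
proof -
  have "\<forall>x\<in>X. \<exists>t. 0 \<le> t \<and> t \<le> 1 \<and> t * a x \<le> a' x \<and> a x * (1 - t) \<le> \<bar>a x - a' x\<bar>"
    using a' shrink_factor by blast
  then obtain \<alpha> where \<alpha>: "\<forall>x\<in>X. 0 \<le> \<alpha> x \<and> \<alpha> x \<le> 1 \<and>
      \<alpha> x * a x \<le> a' x \<and> a x * (1 - \<alpha> x) \<le> \<bar>a x - a' x\<bar>"
    by metis
  have "\<forall>y\<in>Y. \<exists>t. 0 \<le> t \<and> t \<le> 1 \<and> t * b y \<le> b' y \<and> b y * (1 - t) \<le> \<bar>b y - b' y\<bar>"
    using b' shrink_factor by blast
  then obtain \<beta> where \<beta>: "\<forall>y\<in>Y. 0 \<le> \<beta> y \<and> \<beta> y \<le> 1 \<and>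
      \<beta> y * b y \<le> b' y \<and> b y * (1 - \<beta> y) \<le> \<bar>b y - b' y\<bar>"
    by metis
  define S where "S x y = \<alpha> x * \<beta> y * P x y" for x y
  have "\<forall>x\<in>X. 0 \<le> \<alpha> x \<and> \<alpha> x \<le> 1" "\<forall>y\<in>Y. 0 \<le> \<beta> y \<and> \<beta> y \<le> 1"
    using \<alpha> \<beta> by blast+
  note shrink = transport_plan_shrink[OF P this, folded S_def]
  have rows: "(\<Sum>y\<in>Y. S x y) \<le> a' x" if "x \<in> X" for x
  proof -
    from shrink(2) \<alpha> that have "(\<Sum>y\<in>Y. S x y) \<le> \<alpha> x * a x" "\<alpha> x * a x \<le> a' x" by auto
    then show ?thesis by linarith
  qed
  have cols: "(\<Sum>x\<in>X. S x y) \<le> b' y" if "y \<in> Y" for y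
  proof -
    from shrink(3) \<beta> that have "(\<Sum>x\<in>X. S x y) \<le> \<beta> y * b y" "\<beta> y * b y \<le> b' y" by auto
    then show ?thesis by linarith
  qed
  have "\<forall>x\<in>X. \<forall>y\<in>Y. 0 \<le> S x y" and "sum a' X = sum b' Y"
    using shrink(1) mass by auto
  with rows cols obtain Q where Q: "transport_plan X Y Q a' b'"
    and SQ: "\<forall>x\<in>X. \<forall>y\<in>Y. S x y \<le> Q x y"
    using transport_plan_completion[OF fin, of S a' b'] by blast
  \<comment> \<open>both plans dominate the common part S and carry the same mass\<close>
  have "(\<Sum>x\<in>X. \<Sum>y\<in>Y. \<bar>P x y - Q x y\<bar>)
      \<le> (\<Sum>x\<in>X. \<Sum>y\<in>Y. (P x y - S x y) + (Q x y - S x y))"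
    using shrink(1) SQ by (intro sum_mono) (auto simp: abs_le_iff)
  also have "\<dots> = 2 * (\<Sum>x\<in>X. \<Sum>y\<in>Y. P x y * (1 - \<alpha> x * \<beta> y))"
    using transport_plan_mass(1)[OF P] transport_plan_mass(1)[OF Q] mass
    by (simp add: S_def sum.distrib sum_subtractf sum_distrib_left algebra_simps)
  also have "\<dots> \<le> 2 * ((\<Sum>x\<in>X. a x * (1 - \<alpha> x)) + (\<Sum>y\<in>Y. b y * (1 - \<beta> y)))"
    using transport_plan_shrink_loss[OF P, of \<alpha> \<beta>] \<alpha> \<beta> by simp
  also have "\<dots> \<le> 2 * ((\<Sum>x\<in>X. \<bar>a x - a' x\<bar>) + (\<Sum>y\<in>Y. \<bar>b y - b' y\<bar>))"
    using \<alpha> \<beta> by (intro mult_left_mono add_mono sum_mono) auto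
  finally show thesis using Q that by blast
qed

lemma transport_plan_change_shift:
  assumes fin: "finite X" "finite Y"
    and P: "transport_plan X Y P (\<lambda>x. p x + s x) (\<lambda>y. q y + t y)"
    and sums: "sum p X = 1" "sum q Y = 1" "sum s X = 0" "sum s' X = 0" "sum t' Y = 0"
    and a': "\<forall>x\<in>X. 0 \<le> p x + s' x" and b': "\<forall>y\<in>Y. 0 \<le> q y + t' y"
  shows "\<exists>Q. transport_plan X Y Q (\<lambda>x. p x + s' x) (\<lambda>y. q y + t' y) \<and>
    (\<Sum>x\<in>X. \<Sum>y\<in>Y. \<bar>P x y - Q x y\<bar>) \<le> 2 * ((\<Sum>x\<in>X. \<bar>s x - s' x\<bar>) + (\<Sum>y\<in>Y. \<bar>t y - t' y\<bar>))"
proof -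
  have "sum (\<lambda>x. p x + s' x) X = sum (\<lambda>x. p x + s x) X"
    and "sum (\<lambda>y. q y + t' y) Y = sum (\<lambda>x. p x + s x) X"
    using sums by (simp_all add: sum.distrib)
  from transport_plan_repair[OF fin P a' b' this] show ?thesis by auto
qed

lemma abs_sub_shrink_add_le:
  fixes p s l :: real
  assumes "0 \<le> p" "0 \<le> s" "0 \<le> l"
  shows "\<bar>p - ((1 - l) * p + s)\<bar> \<le> l * p + s"
  using assms by (simp add: abs_le_iff algebra_simps)

lemma transport_plan_perturb_left:
  assumes P: "transport_plan X Y P a b" and r: "\<forall>x\<in>X. 0 \<le> r x"
    and l: "sum r X = l" "l \<le> 1" and b: "sum b Y = 1"
  shows "transport_plan X Y (\<lambda>x y. (1 - l) * P x y + r x * b y) (\<lambda>x. (1 - l) * a x + r x) b"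
    and "(\<Sum>x\<in>X. \<Sum>y\<in>Y. \<bar>P x y - ((1 - l) * P x y + r x * b y)\<bar>) \<le> 2 * l"
proof -
  have b0: "\<forall>y\<in>Y. 0 \<le> b y" using transport_plan_marginal_nonneg(2)[OF P] by blast
  have "0 \<le> l" using r l sum_nonneg by metis
  have "0 \<le> 1 - l" using l by simp
  from transport_plan_add[OF transport_plan_scale[OF P this] transport_plan_product[OF r b0]]
  show "transport_plan X Y (\<lambda>x y. (1 - l) * P x y + r x * b y) (\<lambda>x. (1 - l) * a x + r x) b"
    using l b by (simp add: algebra_simps)
  have "(\<Sum>x\<in>X. \<Sum>y\<in>Y. \<bar>P x y - ((1 - l) * P x y + r x * b y)\<bar>)
      \<le> (\<Sum>x\<in>X. \<Sum>y\<in>Y. l * P x y + r x * b y)"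
    using P r b0 \<open>0 \<le> l\<close> by (intro sum_mono abs_sub_shrink_add_le) (auto simp: transport_plan_def)
  also have "\<dots> = l * (\<Sum>x\<in>X. \<Sum>y\<in>Y. P x y) + sum r X * sum b Y"
    unfolding sum_product by (simp add: sum.distrib sum_distrib_left)
  also have "\<dots> = 2 * l" using transport_plan_mass(2)[OF P] l b by simp
  finally show "(\<Sum>x\<in>X. \<Sum>y\<in>Y. \<bar>P x y - ((1 - l) * P x y + r x * b y)\<bar>) \<le> 2 * l" .
qed

lemma transport_plan_perturb_right:
  assumes P: "transport_plan X Y P a b" and r: "\<forall>y\<in>Y. 0 \<le> r y"
    and l: "sum r Y = l" "l \<le> 1" and a: "sum a X = 1"
  shows "transport_plan X Y (\<lambda>x y. (1 - l) * P x y + a x * r y) a (\<lambda>y. (1 - l) * b y + r y)"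
    and "(\<Sum>x\<in>X. \<Sum>y\<in>Y. \<bar>P x y - ((1 - l) * P x y + a x * r y)\<bar>) \<le> 2 * l"
proof -
  note left = transport_plan_perturb_left[OF transport_plan_transpose[THEN iffD2, OF P] r l a]
  from left(1)[THEN transport_plan_transpose[THEN iffD1]]
  show "transport_plan X Y (\<lambda>x y. (1 - l) * P x y + a x * r y) a (\<lambda>y. (1 - l) * b y + r y)"
    by (simp add: mult.commute)
  have "(\<Sum>x\<in>X. \<Sum>y\<in>Y. \<bar>P x y - ((1 - l) * P x y + a x * r y)\<bar>)
      = (\<Sum>y\<in>Y. \<Sum>x\<in>X. \<bar>P x y - ((1 - l) * P x y + r y * a x)\<bar>)"
    by (subst sum.swap) (simp add: mult.commute)
  with left(2) show "(\<Sum>x\<in>X. \<Sum>y\<in>Y. \<bar>P x y - ((1 - l) * P x y + a x * r y)\<bar>) \<le> 2 * l"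
    by simp
qed

lemma transport_plan_perturb:
  assumes P: "transport_plan X Y P a b" and a: "sum a X = 1" and b: "sum b Y = 1"
    and r: "\<forall>x\<in>X. 0 \<le> r x" "sum r X = l" "l \<le> 1"
    and r': "\<forall>y\<in>Y. 0 \<le> r' y" "sum r' Y = l'" "l' \<le> 1"
  shows "\<exists>Q. transport_plan X Y Q (\<lambda>x. (1 - l) * a x + r x) (\<lambda>y. (1 - l') * b y + r' y) \<and>
    (\<Sum>x\<in>X. \<Sum>y\<in>Y. \<bar>P x y - Q x y\<bar>) \<le> 2 * (l + l')"
proof -
  define a1 where "a1 x = (1 - l) * a x + r x" for x
  define P1 where "P1 x y = (1 - l) * P x y + r x * b y" for x y
  define Q where "Q x y = (1 - l') * P1 x y + a1 x * r' y" for x y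
  note left = transport_plan_perturb_left[OF P r b, folded a1_def P1_def]
  have "sum a1 X = 1" using a r by (simp add: a1_def sum.distrib sum_distrib_left[symmetric])
  note right = transport_plan_perturb_right[OF left(1) r' this, folded Q_def]
  have "(\<Sum>x\<in>X. \<Sum>y\<in>Y. \<bar>P x y - Q x y\<bar>)
      \<le> (\<Sum>x\<in>X. \<Sum>y\<in>Y. \<bar>P x y - P1 x y\<bar>) + (\<Sum>x\<in>X. \<Sum>y\<in>Y. \<bar>P1 x y - Q x y\<bar>)"
    by (simp add: sum.distrib[symmetric] sum_mono abs_triangle_ineq4)
  also have "\<dots> \<le> 2 * (l + l')" using left(2) right(2) by simp
  finally show ?thesis using right(1) unfolding a1_def by blast
qed

lemma transport_plan_mix_uniform:
  assumes P: "transport_plan {..<d} {..<d} P a b" and mass: "(\<Sum>x<d. \<Sum>y<d. P x y) = 1"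
    and d: "0 < d" and l: "0 \<le> l" "l \<le> 1"
  shows "transport_plan {..<d} {..<d} (\<lambda>x y. (1 - l) * P x y + l / real d ^ 2)
           (\<lambda>x. (1 - l) * a x + l / real d) (\<lambda>y. (1 - l) * b y + l / real d)"
    and "(\<Sum>x<d. \<Sum>y<d. \<bar>P x y - ((1 - l) * P x y + l / real d ^ 2)\<bar>) \<le> 2 * l"
proof -
  have "0 \<le> 1 - l" "0 \<le> l / real d ^ 2" using l by simp_all
  from transport_plan_add[OF transport_plan_scale[OF P this(1)] transport_plan_const[OF this(2)]]
  show "transport_plan {..<d} {..<d} (\<lambda>x y. (1 - l) * P x y + l / real d ^ 2)
           (\<lambda>x. (1 - l) * a x + l / real d) (\<lambda>y. (1 - l) * b y + l / real d)"
    using d by (simp add: power2_eq_square)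
  have "(\<Sum>x<d. \<Sum>y<d. \<bar>P x y - ((1 - l) * P x y + l / real d ^ 2)\<bar>)
      \<le> (\<Sum>x<d. \<Sum>y<d. l * P x y + l / real d ^ 2)"
    using P l by (intro sum_mono abs_sub_shrink_add_le) (auto simp: transport_plan_def)
  also have "\<dots> = 2 * l"
    using mass d by (simp add: sum.distrib sum_distrib_left[symmetric] power2_eq_square)
  finally show "(\<Sum>x<d. \<Sum>y<d. \<bar>P x y - ((1 - l) * P x y + l / real d ^ 2)\<bar>) \<le> 2 * l" .
qed

section \<open>Marginal vectors\<close>

lemma in_L2nu_iff_transport_plans:
  assumes E: "E \<subseteq> {1..n} \<times> {1..n}" and \<nu>: "slack_vector E d \<nu>"
  shows "in_L2nu n E d \<nu> Gv Ge \<longleftrightarrow> (\<forall>i\<in>{1..n}. in_simplex d (Gv i)) \<and>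
    (\<forall>(i,j)\<in>E. transport_plan {..<d} {..<d} (Ge i j) (\<lambda>x. Gv i x + \<nu> i j x) (\<lambda>y. Gv j y + \<nu> j i y))"
    (is "_ \<longleftrightarrow> ?simplices \<and> ?plans")
proof
  assume "in_L2nu n E d \<nu> Gv Ge"
  then show "?simplices \<and> ?plans" by (auto simp: in_L2nu_def transport_plan_def)
next
  assume R: "?simplices \<and> ?plans"
  have "(\<Sum>x<d. \<Sum>y<d. Ge i j x y) = 1" if "(i,j) \<in> E" for i j
  proof -
    have "(\<Sum>x<d. \<Sum>y<d. Ge i j x y) = (\<Sum>x<d. Gv i x + \<nu> i j x)"
      using R that transport_plan_mass(1) by fastforce
    also have "\<dots> = 1"
    proof -
      have "i \<in> {1..n}" "sum (\<nu> i j) {..<d} = 0" using E \<nu> that by (auto simp: slack_vector_def)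
      then show ?thesis using R by (simp add: sum.distrib in_simplex_def)
    qed
    finally show ?thesis .
  qed
  then show "in_L2nu n E d \<nu> Gv Ge" using R by (auto simp: in_L2nu_def transport_plan_def)
qed

lemma in_L2_iff_transport_plans:
  assumes "E \<subseteq> {1..n} \<times> {1..n}"
  shows "in_L2 n E d Gv Ge \<longleftrightarrow> (\<forall>i\<in>{1..n}. in_simplex d (Gv i)) \<and>
    (\<forall>(i,j)\<in>E. transport_plan {..<d} {..<d} (Ge i j) (Gv i) (Gv j))"
  using in_L2nu_iff_transport_plans[OF assms, where \<nu>="\<lambda>_ _ _. 0"]
  by (simp add: in_L2_def slack_vector_def)

lemma marg_dist1_le:
  assumes "\<And>i. i \<in> {1..n} \<Longrightarrow> (\<Sum>x<d. \<bar>Gv i x - Gv' i x\<bar>) \<le> f i"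
    and "\<And>i j. (i,j) \<in> E \<Longrightarrow> (\<Sum>x<d. \<Sum>y<d. \<bar>Ge i j x y - Ge' i j x y\<bar>) \<le> g i j"
  shows "marg_dist1 n E d Gv Ge Gv' Ge' \<le> (\<Sum>i\<in>{1..n}. f i) + (\<Sum>(i,j)\<in>E. g i j)"
  unfolding marg_dist1_def using assms by (intro add_mono sum_mono) auto

lemma marg_dist1_triangle:
  "marg_dist1 n E d Gv Ge Gv'' Ge''
     \<le> marg_dist1 n E d Gv Ge Gv' Ge' + marg_dist1 n E d Gv' Ge' Gv'' Ge''"
proof -
  have "marg_dist1 n E d Gv Ge Gv'' Ge'' \<le>
    (\<Sum>i\<in>{1..n}. (\<Sum>x<d. \<bar>Gv i x - Gv' i x\<bar>) + (\<Sum>x<d. \<bar>Gv' i x - Gv'' i x\<bar>)) +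
    (\<Sum>(i,j)\<in>E. (\<Sum>x<d. \<Sum>y<d. \<bar>Ge i j x y - Ge' i j x y\<bar>) +
                 (\<Sum>x<d. \<Sum>y<d. \<bar>Ge' i j x y - Ge'' i j x y\<bar>))"
    by (rule marg_dist1_le) (simp_all add: sum.distrib[symmetric] sum_mono abs_triangle_ineq4)
  then show ?thesis by (simp add: marg_dist1_def sum.distrib case_prod_unfold)
qed

lemma lower_bounded_mono:
  "lower_bounded n E d \<tau>' Gv Ge \<Longrightarrow> \<tau> \<le> \<tau>' \<Longrightarrow> lower_bounded n E d \<tau> Gv Ge"
  unfolding lower_bounded_def by fastforce

lemma slack_norm1_nonneg: "0 \<le> slack_norm1 E d \<nu>"
  unfolding slack_norm1_def by (intro sum_nonneg) (auto simp: case_prod_unfold intro!: sum_nonneg)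

lemma slack_norm1_scale: "slack_norm1 E d (\<lambda>i j x. c * \<nu> i j x) = \<bar>c\<bar> * slack_norm1 E d \<nu>"
  by (simp add: slack_norm1_def abs_mult sum_distrib_left case_prod_unfold algebra_simps)

lemma in_simplex_mix_uniform:
  assumes p: "in_simplex d p" and d: "0 < d" and l: "0 \<le> l" "l \<le> 1"
  shows "in_simplex d (\<lambda>x. (1 - l) * p x + l / real d)"
    and "(\<Sum>x<d. \<bar>p x - ((1 - l) * p x + l / real d)\<bar>) \<le> 2 * l"
proof -
  show "in_simplex d (\<lambda>x. (1 - l) * p x + l / real d)"
    using p d l by (simp add: in_simplex_def sum.distrib sum_distrib_left[symmetric])
  have "(\<Sum>x<d. \<bar>p x - ((1 - l) * p x + l / real d)\<bar>) \<le> (\<Sum>x<d. l * p x + l / real d)"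
    using p l by (intro sum_mono abs_sub_shrink_add_le) (auto simp: in_simplex_def)
  also have "\<dots> = 2 * l"
    using p d by (simp add: in_simplex_def sum.distrib sum_distrib_left[symmetric])
  finally show "(\<Sum>x<d. \<bar>p x - ((1 - l) * p x + l / real d)\<bar>) \<le> 2 * l" .
qed

lemma L2nu_mix_uniform:
  assumes E: "E \<subseteq> {1..n} \<times> {1..n}" and \<nu>: "slack_vector E d \<nu>"
    and L: "in_L2nu n E d \<nu> Gv Ge" and d: "0 < d" and l: "0 \<le> l" "l \<le> 1"
  obtains Gv' Ge' where "in_L2nu n E d (\<lambda>i j x. (1 - l) * \<nu> i j x) Gv' Ge'"
    and "lower_bounded n E d (l / real d ^ 2) Gv' Ge'"
    and "marg_dist1 n E d Gv Ge Gv' Ge' \<le> 2 * l * (real (card E) + real n)"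
proof -
  define Gv' where "Gv' = (\<lambda>i x. (1 - l) * Gv i x + l / real d)"
  define Ge' where "Ge' = (\<lambda>i j x y. (1 - l) * Ge i j x y + l / real d ^ 2)"
  have simplices: "\<forall>i\<in>{1..n}. in_simplex d (Gv i)"
    and plans: "\<forall>(i,j)\<in>E. transport_plan {..<d} {..<d} (Ge i j)
                  (\<lambda>x. Gv i x + \<nu> i j x) (\<lambda>y. Gv j y + \<nu> j i y)"
    using L in_L2nu_iff_transport_plans[OF E \<nu>] by blast+
  have vertex: "in_simplex d (Gv' i) \<and> (\<Sum>x<d. \<bar>Gv i x - Gv' i x\<bar>) \<le> 2 * l"
    if "i \<in> {1..n}" for i
    using in_simplex_mix_uniform[OF _ d l, of "Gv i"] simplices that by (simp add: Gv'_def)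
  have edge: "transport_plan {..<d} {..<d} (Ge' i j)
      (\<lambda>x. Gv' i x + (1 - l) * \<nu> i j x) (\<lambda>y. Gv' j y + (1 - l) * \<nu> j i y) \<and>
      (\<Sum>x<d. \<Sum>y<d. \<bar>Ge i j x y - Ge' i j x y\<bar>) \<le> 2 * l" if "(i,j) \<in> E" for i j
  proof -
    have P: "transport_plan {..<d} {..<d} (Ge i j) (\<lambda>x. Gv i x + \<nu> i j x) (\<lambda>y. Gv j y + \<nu> j i y)"
      using plans that by blast
    have "(\<Sum>x<d. \<Sum>y<d. Ge i j x y) = 1" using L that by (auto simp: in_L2nu_def)
    note mix = transport_plan_mix_uniform[OF P this d l]
    from mix(1) have "transport_plan {..<d} {..<d} (Ge' i j)
        (\<lambda>x. Gv' i x + (1 - l) * \<nu> i j x) (\<lambda>y. Gv' j y + (1 - l) * \<nu> j i y)"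
      unfolding Ge'_def by (rule transport_plan_cong) (simp_all add: Gv'_def algebra_simps)
    with mix(2) show ?thesis by (simp add: Ge'_def)
  qed
  have "slack_vector E d (\<lambda>i j x. (1 - l) * \<nu> i j x)"
    using \<nu> by (auto simp: slack_vector_def sum_distrib_left[symmetric])
  then have "in_L2nu n E d (\<lambda>i j x. (1 - l) * \<nu> i j x) Gv' Ge'"
    using in_L2nu_iff_transport_plans[OF E] vertex edge by blast
  moreover have "lower_bounded n E d (l / real d ^ 2) Gv' Ge'"
  proof -
    have "l / real d ^ 2 \<le> l / real d"
      using d l by (intro divide_left_mono) (auto simp: power2_eq_square)
    moreover have "0 \<le> (1 - l) * Gv i x" if "i \<in> {1..n}" "x < d" for i x
      using simplices that l by (simp add: in_simplex_def)
    moreover have "0 \<le> (1 - l) * Ge i j x y" if "(i,j) \<in> E" "x < d" "y < d" for i j x y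
      using L that l by (auto simp: in_L2nu_def)
    ultimately show ?thesis by (fastforce simp: lower_bounded_def Gv'_def Ge'_def)
  qed
  moreover have "marg_dist1 n E d Gv Ge Gv' Ge' \<le> 2 * l * (real (card E) + real n)"
  proof -
    have "marg_dist1 n E d Gv Ge Gv' Ge' \<le> (\<Sum>i\<in>{1..n}. 2 * l) + (\<Sum>(i,j)\<in>E. 2 * l)"
      using vertex edge by (intro marg_dist1_le) auto
    then show ?thesis by (simp add: algebra_simps)
  qed
  ultimately show thesis using that by blast
qed

lemma L2nu_change_slack:
  assumes E: "E \<subseteq> {1..n} \<times> {1..n}" and \<nu>: "slack_vector E d \<nu>" and \<nu>': "slack_vector E d \<nu>'"
    and L: "in_L2nu n E d \<nu> Gv Ge"
    and nonneg: "\<forall>(i,j)\<in>E. \<forall>x<d. 0 \<le> Gv i x + \<nu>' i j x \<and> 0 \<le> Gv j x + \<nu>' j i x"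
  obtains Ge' where "in_L2nu n E d \<nu>' Gv Ge'"
    and "marg_dist1 n E d Gv Ge Gv Ge' \<le> 2 * slack_norm1 E d (\<lambda>i j x. \<nu> i j x - \<nu>' i j x)"
proof -
  define repaired where "repaired i j Q \<longleftrightarrow>
      transport_plan {..<d} {..<d} Q (\<lambda>x. Gv i x + \<nu>' i j x) (\<lambda>y. Gv j y + \<nu>' j i y) \<and>
      (\<Sum>x<d. \<Sum>y<d. \<bar>Ge i j x y - Q x y\<bar>) \<le> 2 * (\<Sum>x<d. \<bar>\<nu> i j x - \<nu>' i j x\<bar> + \<bar>\<nu> j i x - \<nu>' j i x\<bar>)"
    for i j Q
  have simplices: "\<forall>i\<in>{1..n}. in_simplex d (Gv i)"
    and plans: "\<forall>(i,j)\<in>E. transport_plan {..<d} {..<d} (Ge i j)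
                  (\<lambda>x. Gv i x + \<nu> i j x) (\<lambda>y. Gv j y + \<nu> j i y)"
    using L in_L2nu_iff_transport_plans[OF E \<nu>] by blast+
  have "\<exists>Q. repaired i j Q" if "(i,j) \<in> E" for i j
  proof -
    have "i \<in> {1..n}" "j \<in> {1..n}" using E that by auto
    then have sums: "sum (Gv i) {..<d} = 1" "sum (Gv j) {..<d} = 1"
      "sum (\<nu> i j) {..<d} = 0" "sum (\<nu>' i j) {..<d} = 0" "sum (\<nu>' j i) {..<d} = 0"
      using simplices \<nu> \<nu>' that by (auto simp: in_simplex_def slack_vector_def)
    have "\<forall>x\<in>{..<d}. 0 \<le> Gv i x + \<nu>' i j x" "\<forall>y\<in>{..<d}. 0 \<le> Gv j y + \<nu>' j i y"
      using nonneg that by auto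
    moreover have "transport_plan {..<d} {..<d} (Ge i j)
        (\<lambda>x. Gv i x + \<nu> i j x) (\<lambda>y. Gv j y + \<nu> j i y)"
      using plans that by blast
    ultimately show ?thesis
      using transport_plan_change_shift[OF finite_lessThan finite_lessThan _ sums]
      by (simp add: repaired_def sum.distrib)
  qed
  then obtain Q where Q: "\<And>i j. (i,j) \<in> E \<Longrightarrow> repaired i j (Q i j)" by metis
  have "in_L2nu n E d \<nu>' Gv Q"
    using Q simplices in_L2nu_iff_transport_plans[OF E \<nu>'] by (auto simp: repaired_def)
  moreover have "marg_dist1 n E d Gv Ge Gv Q
      \<le> (\<Sum>i\<in>{1..n}. 0) + (\<Sum>(i,j)\<in>E. 2 * (\<Sum>x<d. \<bar>\<nu> i j x - \<nu>' i j x\<bar> + \<bar>\<nu> j i x - \<nu>' j i x\<bar>))"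
    using Q by (intro marg_dist1_le) (auto simp: repaired_def)
  ultimately show thesis
    using that by (simp add: slack_norm1_def sum_distrib_left case_prod_unfold)
qed

lemma L2_perturb_vertices:
  assumes E: "E \<subseteq> {1..n} \<times> {1..n}" and L: "in_L2 n E d Gv Ge"
    and r: "\<forall>i\<in>{1..n}. \<forall>x<d. 0 \<le> r i x" and l: "\<forall>i\<in>{1..n}. sum (r i) {..<d} = l i \<and> l i \<le> 1"
  obtains Ge' where "in_L2 n E d (\<lambda>i x. (1 - l i) * Gv i x + r i x) Ge'"
    and "marg_dist1 n E d Gv Ge (\<lambda>i x. (1 - l i) * Gv i x + r i x) Ge'
           \<le> (\<Sum>i\<in>{1..n}. 2 * l i) + (\<Sum>(i,j)\<in>E. 2 * (l i + l j))"
proof -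
  define Gv' where "Gv' = (\<lambda>i x. (1 - l i) * Gv i x + r i x)"
  define perturbed where "perturbed i j Q \<longleftrightarrow> transport_plan {..<d} {..<d} Q (Gv' i) (Gv' j) \<and>
      (\<Sum>x<d. \<Sum>y<d. \<bar>Ge i j x y - Q x y\<bar>) \<le> 2 * (l i + l j)" for i j Q
  have simplices: "\<forall>i\<in>{1..n}. in_simplex d (Gv i)"
    and plans: "\<forall>(i,j)\<in>E. transport_plan {..<d} {..<d} (Ge i j) (Gv i) (Gv j)"
    using L in_L2_iff_transport_plans[OF E] by blast+
  have "\<exists>Q. perturbed i j Q" if "(i,j) \<in> E" for i j
  proof -
    have "i \<in> {1..n}" "j \<in> {1..n}" using E that by auto
    moreover have "transport_plan {..<d} {..<d} (Ge i j) (Gv i) (Gv j)" using plans that by blast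
    ultimately show ?thesis
      using transport_plan_perturb[of "{..<d}" "{..<d}" "Ge i j" "Gv i" "Gv j" "r i" "l i" "r j" "l j"]
        simplices r l by (simp add: perturbed_def Gv'_def in_simplex_def)
  qed
  then obtain Q where Q: "\<And>i j. (i,j) \<in> E \<Longrightarrow> perturbed i j (Q i j)" by metis
  have "in_simplex d (Gv' i)" if "i \<in> {1..n}" for i
    using simplices r l that
    by (simp add: in_simplex_def Gv'_def sum.distrib sum_distrib_left[symmetric])
  then have "in_L2 n E d Gv' Q"
    using Q in_L2_iff_transport_plans[OF E] by (auto simp: perturbed_def)
  moreover have "marg_dist1 n E d Gv Ge Gv' Q \<le> (\<Sum>i\<in>{1..n}. 2 * l i) + (\<Sum>(i,j)\<in>E. 2 * (l i + l j))"
  proof (rule marg_dist1_le)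
    fix i assume i: "i \<in> {1..n}"
    then have "(\<Sum>x<d. \<bar>Gv i x - Gv' i x\<bar>) \<le> (\<Sum>x<d. l i * Gv i x + r i x)"
      using simplices r l sum_nonneg[of "{..<d}" "r i"] unfolding Gv'_def
      by (intro sum_mono abs_sub_shrink_add_le) (auto simp: in_simplex_def)
    also have "\<dots> = 2 * l i"
      using simplices l i by (simp add: in_simplex_def sum.distrib sum_distrib_left[symmetric])
    finally show "(\<Sum>x<d. \<bar>Gv i x - Gv' i x\<bar>) \<le> 2 * l i" .
  qed (use Q in \<open>auto simp: perturbed_def\<close>)
  ultimately show thesis using that unfolding Gv'_def by blast
qed

section \<open>Neighbourhoods and the slack envelope\<close>

definition neighbours :: "(nat \<times> nat) set \<Rightarrow> nat \<Rightarrow> nat set" where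
  "neighbours E k = {l. (k,l) \<in> E \<or> (l,k) \<in> E}"

lemma finite_neighbours: "E \<subseteq> {1..n} \<times> {1..n} \<Longrightarrow> finite (neighbours E k)"
  by (rule finite_subset[of _ "{1..n}"]) (auto simp: neighbours_def)

lemma card_neighbours_le_max_degree:
  "k \<in> {1..n} \<Longrightarrow> card (neighbours E k) \<le> max_degree n E"
  unfolding max_degree_def degree_def neighbours_def by (intro Max_ge) auto

lemma sum_neighbours_eq_sum_edges:
  assumes G: "simple_graph n E"
  shows "(\<Sum>k\<in>{1..n}. \<Sum>l\<in>neighbours E k. h k l) = (\<Sum>(i,j)\<in>E. h i j + h j i)"
proof -
  have E: "E \<subseteq> {1..n} \<times> {1..n}" and asym: "\<And>i j. (i,j) \<in> E \<Longrightarrow> (j,i) \<notin> E"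
    using G by (auto simp: simple_graph_def)
  have "(\<Sum>k\<in>{1..n}. \<Sum>l\<in>neighbours E k. h k l) = (\<Sum>(k,l)\<in>Sigma {1..n} (neighbours E). h k l)"
    using finite_neighbours[OF E] by (subst sum.Sigma) auto
  also have "Sigma {1..n} (neighbours E) = E \<union> prod.swap ` E"
  proof (intro equalityI subsetI)
    fix p assume "p \<in> Sigma {1..n} (neighbours E)"
    then show "p \<in> E \<union> prod.swap ` E" by (cases p) (auto simp: neighbours_def intro: rev_image_eqI)
  qed (use E in \<open>auto simp: neighbours_def\<close>)
  also have "(\<Sum>(k,l)\<in>E \<union> prod.swap ` E. h k l) = (\<Sum>(k,l)\<in>E. h k l) + (\<Sum>(k,l)\<in>prod.swap ` E. h k l)"
    using finite_subset[OF E] asym by (intro sum.union_disjoint) auto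
  also have "(\<Sum>(k,l)\<in>prod.swap ` E. h k l) = (\<Sum>(i,j)\<in>E. h j i)"
    by (subst sum.reindex) (auto simp: case_prod_unfold)
  finally show ?thesis by (simp add: sum.distrib case_prod_unfold)
qed

lemma sum_edges_le_max_degree:
  assumes G: "simple_graph n E" and f: "\<forall>k\<in>{1..n}. 0 \<le> f k"
  shows "(\<Sum>(i,j)\<in>E. f i + f j) \<le> real (max_degree n E) * (\<Sum>k\<in>{1..n}. f k)"
proof -
  have "(\<Sum>(i,j)\<in>E. f i + f j) = (\<Sum>k\<in>{1..n}. real (card (neighbours E k)) * f k)"
    using sum_neighbours_eq_sum_edges[OF G, of "\<lambda>k l. f k"] by simp
  also have "\<dots> \<le> (\<Sum>k\<in>{1..n}. real (max_degree n E) * f k)"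
    using f card_neighbours_le_max_degree by (intro sum_mono mult_right_mono) auto
  finally show ?thesis by (simp add: sum_distrib_left)
qed

lemma one_le_max_degree:
  assumes E: "E \<subseteq> {1..n} \<times> {1..n}" and "(i,j) \<in> E"
  shows "1 \<le> max_degree n E"
proof -
  have "j \<in> neighbours E i" using assms(2) by (simp add: neighbours_def)
  then have "1 \<le> card (neighbours E i)"
    using finite_neighbours[OF E] by (metis One_nat_def card_gt_0_iff empty_iff less_eq_Suc_le)
  also have "\<dots> \<le> max_degree n E" using assms by (intro card_neighbours_le_max_degree) auto
  finally show ?thesis .
qed

definition slack_envelope ::
    "(nat \<times> nat) set \<Rightarrow> (nat \<Rightarrow> nat \<Rightarrow> nat \<Rightarrow> real) \<Rightarrow> nat \<Rightarrow> nat \<Rightarrow> real" where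
  "slack_envelope E \<nu> k x = Max (insert 0 ((\<lambda>l. \<bar>\<nu> k l x\<bar>) ` neighbours E k))"

context
  fixes n :: nat and E :: "(nat \<times> nat) set" and \<nu> :: "nat \<Rightarrow> nat \<Rightarrow> nat \<Rightarrow> real"
  assumes E: "E \<subseteq> {1..n} \<times> {1..n}"
begin

lemma slack_envelope_nonneg: "0 \<le> slack_envelope E \<nu> k x"
  unfolding slack_envelope_def using finite_neighbours[OF E] by (intro Max_ge) auto

lemma abs_le_slack_envelope: "l \<in> neighbours E k \<Longrightarrow> \<bar>\<nu> k l x\<bar> \<le> slack_envelope E \<nu> k x"
  unfolding slack_envelope_def using finite_neighbours[OF E] by (intro Max_ge) auto

lemma slack_envelope_le:
  "0 \<le> c \<Longrightarrow> (\<And>l. l \<in> neighbours E k \<Longrightarrow> \<bar>\<nu> k l x\<bar> \<le> c) \<Longrightarrow> slack_envelope E \<nu> k x \<le> c"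
  unfolding slack_envelope_def using finite_neighbours[OF E] by (subst Max_le_iff) auto

lemma slack_envelope_le_sum: "slack_envelope E \<nu> k x \<le> (\<Sum>l\<in>neighbours E k. \<bar>\<nu> k l x\<bar>)"
  unfolding slack_envelope_def using finite_neighbours[OF E]
  by (subst Max_le_iff) (auto intro: sum_nonneg member_le_sum)

end

lemma sum_slack_envelope_le:
  assumes G: "simple_graph n E"
  shows "(\<Sum>k\<in>{1..n}. \<Sum>x<d. slack_envelope E \<nu> k x) \<le> slack_norm1 E d \<nu>"
proof -
  have E: "E \<subseteq> {1..n} \<times> {1..n}" using G by (simp add: simple_graph_def)
  have "(\<Sum>k\<in>{1..n}. \<Sum>x<d. slack_envelope E \<nu> k x) \<le> (\<Sum>k\<in>{1..n}. \<Sum>x<d. \<Sum>l\<in>neighbours E k. \<bar>\<nu> k l x\<bar>)"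
    by (intro sum_mono slack_envelope_le_sum[OF E])
  also have "\<dots> = (\<Sum>k\<in>{1..n}. \<Sum>l\<in>neighbours E k. \<Sum>x<d. \<bar>\<nu> k l x\<bar>)"
    by (simp add: sum.swap[of _ "{..<d}"])
  also have "\<dots> = (\<Sum>(i,j)\<in>E. (\<Sum>x<d. \<bar>\<nu> i j x\<bar>) + (\<Sum>x<d. \<bar>\<nu> j i x\<bar>))"
    by (rule sum_neighbours_eq_sum_edges[OF G])
  also have "\<dots> = slack_norm1 E d \<nu>"
    by (simp add: slack_norm1_def sum.distrib)
  finally show ?thesis .
qed

lemma sum_slack_envelope_le_quarter:
  assumes E: "E \<subseteq> {1..n} \<times> {1..n}"
    and \<nu>_inf: "\<forall>(i,j)\<in>E. \<forall>x<d. \<bar>\<nu> i j x\<bar> \<le> 1 / (4 * real d) \<and> \<bar>\<nu> j i x\<bar> \<le> 1 / (4 * real d)"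
  shows "(\<Sum>x<d. slack_envelope E \<nu> k x) \<le> 1 / 4"
proof -
  have "slack_envelope E \<nu> k x \<le> 1 / (4 * real d)" if "x < d" for x
    using \<nu>_inf that by (intro slack_envelope_le[OF E]) (auto simp: neighbours_def)
  then have "(\<Sum>x<d. slack_envelope E \<nu> k x) \<le> real (card {..<d}) * (1 / (4 * real d))"
    by (intro sum_bounded_above) auto
  then show ?thesis by (cases "d = 0") auto
qed

lemma slack_envelope_vertices_edges_le:
  assumes G: "simple_graph n E"
  shows "(\<Sum>k\<in>{1..n}. \<Sum>x<d. slack_envelope E \<nu> k x)
      + (\<Sum>(i,j)\<in>E. (\<Sum>x<d. slack_envelope E \<nu> i x) + (\<Sum>x<d. slack_envelope E \<nu> j x))
    \<le> (1 + real (max_degree n E)) * slack_norm1 E d \<nu>"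
proof -
  have E: "E \<subseteq> {1..n} \<times> {1..n}" using G by (simp add: simple_graph_def)
  define W where "W k = (\<Sum>x<d. slack_envelope E \<nu> k x)" for k
  have vertices: "sum W {1..n} \<le> slack_norm1 E d \<nu>"
    unfolding W_def by (rule sum_slack_envelope_le[OF G])
  have edges: "(\<Sum>(i,j)\<in>E. W i + W j) \<le> real (max_degree n E) * sum W {1..n}"
    using slack_envelope_nonneg[OF E]
    by (intro sum_edges_le_max_degree[OF G]) (simp add: W_def sum_nonneg)
  have "real (max_degree n E) * sum W {1..n} \<le> real (max_degree n E) * slack_norm1 E d \<nu>"
    using vertices by (intro mult_left_mono) auto
  with vertices edges show ?thesis unfolding W_def by (simp add: algebra_simps)
qed

lemma two_le_dim_if_slack_norm1_nonzero:
  assumes "slack_vector E d \<nu>" and "slack_norm1 E d \<nu> \<noteq> 0"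
  shows "2 \<le> d"
proof (rule ccontr)
  assume "\<not> 2 \<le> d"
  then have "d = 0 \<or> d = 1" by auto
  then have "(\<Sum>x<d. \<bar>\<nu> i j x\<bar> + \<bar>\<nu> j i x\<bar>) = 0" if "(i,j) \<in> E" for i j
    using assms(1) that by (auto simp: slack_vector_def)
  then have "slack_norm1 E d \<nu> = 0" unfolding slack_norm1_def by (intro sum.neutral) auto
  with assms(2) show False by contradiction
qed

lemma slack_norm1_degree_estimate:
  assumes E: "E \<subseteq> {1..n} \<times> {1..n}" and \<nu>: "slack_vector E d \<nu>"
  shows "(8 + 4 * real (max_degree n E)) * slack_norm1 E d \<nu>
           \<le> 6 * real d * real (max_degree n E) * slack_norm1 E d \<nu>"
proof (cases "slack_norm1 E d \<nu> = 0")
  case False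
  then have "E \<noteq> {}" by (auto simp: slack_norm1_def)
  then have "1 \<le> real (max_degree n E)" using one_le_max_degree[OF E] by force
  moreover have "6 * 2 * real (max_degree n E) \<le> 6 * real d * real (max_degree n E)"
    using two_le_dim_if_slack_norm1_nonzero[OF \<nu> False] by (intro mult_right_mono) auto
  ultimately have "8 + 4 * real (max_degree n E) \<le> 6 * real d * real (max_degree n E)"
    by linarith
  then show ?thesis using slack_norm1_nonneg by (intro mult_right_mono) auto
qed simp

section \<open>Approximation by interior points\<close>

lemma L2_lift_above_slack:
  assumes G: "simple_graph n E" and L: "in_L2 n E d Gv Ge"
    and \<nu>_inf: "\<forall>(i,j)\<in>E. \<forall>x<d. \<bar>\<nu> i j x\<bar> \<le> 1 / (4 * real d) \<and> \<bar>\<nu> j i x\<bar> \<le> 1 / (4 * real d)"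
  obtains Gv' Ge' where "in_L2 n E d Gv' Ge'"
    and "\<forall>(i,j)\<in>E. \<forall>x<d. 2 * \<bar>\<nu> i j x\<bar> \<le> Gv' i x \<and> 2 * \<bar>\<nu> j i x\<bar> \<le> Gv' j x"
    and "marg_dist1 n E d Gv Ge Gv' Ge' \<le> 4 * (1 + real (max_degree n E)) * slack_norm1 E d \<nu>"
proof -
  have E: "E \<subseteq> {1..n} \<times> {1..n}" using G by (simp add: simple_graph_def)
  define w where "w = slack_envelope E \<nu>"
  define W where "W k = (\<Sum>x<d. w k x)" for k
  have r: "\<forall>i\<in>{1..n}. \<forall>x<d. 0 \<le> 2 * w i x"
    using slack_envelope_nonneg[OF E] by (simp add: w_def)
  have "2 * W i \<le> 1" for i
    using sum_slack_envelope_le_quarter[OF E \<nu>_inf, of i] by (simp add: W_def w_def)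
  then have l: "\<forall>i\<in>{1..n}. (\<Sum>x<d. 2 * w i x) = 2 * W i \<and> 2 * W i \<le> 1"
    by (simp add: W_def sum_distrib_left[symmetric])
  obtain Ge' where L': "in_L2 n E d (\<lambda>i x. (1 - 2 * W i) * Gv i x + 2 * w i x) Ge'"
    and dist: "marg_dist1 n E d Gv Ge (\<lambda>i x. (1 - 2 * W i) * Gv i x + 2 * w i x) Ge'
           \<le> (\<Sum>i\<in>{1..n}. 2 * (2 * W i)) + (\<Sum>(i,j)\<in>E. 2 * (2 * W i + 2 * W j))"
    by (rule L2_perturb_vertices[OF E L r l])
  have "2 * \<bar>\<nu> i j x\<bar> \<le> (1 - 2 * W i) * Gv i x + 2 * w i x"
    if "i \<in> {1..n}" "j \<in> neighbours E i" "x < d" for i j x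
  proof -
    have "0 \<le> Gv i x" using L that by (auto simp: in_L2_def in_L2nu_def in_simplex_def)
    then have "0 \<le> (1 - 2 * W i) * Gv i x" using \<open>2 * W i \<le> 1\<close> by simp
    moreover have "\<bar>\<nu> i j x\<bar> \<le> w i x"
      unfolding w_def using that(2) by (rule abs_le_slack_envelope[OF E])
    ultimately show ?thesis by linarith
  qed
  then have above: "\<forall>(i,j)\<in>E. \<forall>x<d. 2 * \<bar>\<nu> i j x\<bar> \<le> (1 - 2 * W i) * Gv i x + 2 * w i x \<and>
      2 * \<bar>\<nu> j i x\<bar> \<le> (1 - 2 * W j) * Gv j x + 2 * w j x"
    using E by (auto simp: neighbours_def)
  have "(\<Sum>i\<in>{1..n}. 2 * (2 * W i)) + (\<Sum>(i,j)\<in>E. 2 * (2 * W i + 2 * W j))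
      = 4 * (\<Sum>i\<in>{1..n}. W i) + 4 * (\<Sum>(i,j)\<in>E. W i + W j)"
    by (simp add: sum_distrib_left case_prod_unfold algebra_simps)
  then have "marg_dist1 n E d Gv Ge (\<lambda>i x. (1 - 2 * W i) * Gv i x + 2 * w i x) Ge'
      \<le> 4 * (1 + real (max_degree n E)) * slack_norm1 E d \<nu>"
    using dist slack_envelope_vertices_edges_le[OF G, where d=d and \<nu>=\<nu>, folded w_def, folded W_def]
    unfolding mult.assoc by linarith
  with L' above show thesis by (rule that)
qed

lemma L2_introduce_slack:
  assumes E: "E \<subseteq> {1..n} \<times> {1..n}" and \<nu>: "slack_vector E d \<nu>" and L: "in_L2 n E d Gv Ge"
    and above: "\<forall>(i,j)\<in>E. \<forall>x<d. 2 * \<bar>\<nu> i j x\<bar> \<le> Gv i x \<and> 2 * \<bar>\<nu> j i x\<bar> \<le> Gv j x"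
    and d: "0 < d" and l: "0 \<le> l" "l \<le> 1 / 2"
  obtains Gv' Ge' where "in_L2nu n E d \<nu> Gv' Ge'" and "lower_bounded n E d (l / real d ^ 2) Gv' Ge'"
    and "marg_dist1 n E d Gv Ge Gv' Ge' \<le> 4 * slack_norm1 E d \<nu> + 2 * l * (real (card E) + real n)"
proof -
  \<comment> \<open>mixing with weight l turns the slack c \<nu> into \<nu>\<close>
  define c where "c = 1 / (1 - l)"
  have c: "1 \<le> c" "c \<le> 2" "(1 - l) * c = 1" using l by (auto simp: c_def field_simps)
  have zero: "slack_vector E d (\<lambda>_ _ _. 0)" and c\<nu>: "slack_vector E d (\<lambda>i j x. c * \<nu> i j x)"
    using \<nu> by (auto simp: slack_vector_def sum_distrib_left[symmetric])
  have shift: "0 \<le> g + c * t" if "2 * \<bar>t\<bar> \<le> g" for g t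
  proof -
    have "\<bar>c * t\<bar> \<le> 2 * \<bar>t\<bar>" using c by (simp add: abs_mult mult_right_mono)
    then show ?thesis using that by (simp add: abs_le_iff)
  qed
  then have "\<forall>(i,j)\<in>E. \<forall>x<d. 0 \<le> Gv i x + c * \<nu> i j x \<and> 0 \<le> Gv j x + c * \<nu> j i x"
    using above by auto
  with L2nu_change_slack[OF E zero c\<nu>] L
  obtain Ge1 where L1: "in_L2nu n E d (\<lambda>i j x. c * \<nu> i j x) Gv Ge1"
    and D1: "marg_dist1 n E d Gv Ge Gv Ge1 \<le> 2 * slack_norm1 E d (\<lambda>i j x. (- c) * \<nu> i j x)"
    by (auto simp: in_L2_def)
  have "l \<le> 1" using l by simp
  obtain Gv' Ge' where L2: "in_L2nu n E d (\<lambda>i j x. (1 - l) * (c * \<nu> i j x)) Gv' Ge'"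
    and B: "lower_bounded n E d (l / real d ^ 2) Gv' Ge'"
    and D2: "marg_dist1 n E d Gv Ge1 Gv' Ge' \<le> 2 * l * (real (card E) + real n)"
    by (rule L2nu_mix_uniform[OF E c\<nu> L1 d l(1) \<open>l \<le> 1\<close>])
  have "in_L2nu n E d \<nu> Gv' Ge'" using L2 c(3) by (simp add: mult.assoc[symmetric])
  moreover have "marg_dist1 n E d Gv Ge Gv' Ge'
      \<le> 4 * slack_norm1 E d \<nu> + 2 * l * (real (card E) + real n)"
  proof -
    have "2 * slack_norm1 E d (\<lambda>i j x. (- c) * \<nu> i j x) \<le> 4 * slack_norm1 E d \<nu>"
      using slack_norm1_scale[of E d "- c" \<nu>] c slack_norm1_nonneg[of E d \<nu>]
      by (simp add: mult_right_mono)
    then show ?thesis using marg_dist1_triangle[of n E d Gv Ge Gv' Ge' Gv Ge1] D1 D2 by linarith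
  qed
  ultimately show thesis using that B by blast
qed

lemma L2nu_approx_in_L2:
  assumes E: "E \<subseteq> {1..n} \<times> {1..n}" and \<nu>: "slack_vector E d \<nu>" and L: "in_L2nu n E d \<nu> Gv Ge"
    and d: "0 < d" and \<tau>: "0 \<le> \<tau>" "real d ^ 2 * \<tau> \<le> 1"
  obtains Gv' Ge' where "in_L2 n E d Gv' Ge'" and "lower_bounded n E d \<tau> Gv' Ge'"
    and "marg_dist1 n E d Gv Ge Gv' Ge'
           \<le> 2 * slack_norm1 E d \<nu> + 2 * (real (card E) + real n) * real d ^ 2 * \<tau>"
proof -
  have zero: "slack_vector E d (\<lambda>_ _ _. 0)" by (simp add: slack_vector_def)
  have "\<forall>i\<in>{1..n}. \<forall>x<d. 0 \<le> Gv i x" using L by (simp add: in_L2nu_def in_simplex_def)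
  then have "\<forall>(i,j)\<in>E. \<forall>x<d. 0 \<le> Gv i x + 0 \<and> 0 \<le> Gv j x + 0" using E by fastforce
  from L2nu_change_slack[OF E \<nu> zero L this] obtain Ge1 where L1: "in_L2nu n E d (\<lambda>_ _ _. 0) Gv Ge1"
    and D1: "marg_dist1 n E d Gv Ge Gv Ge1 \<le> 2 * slack_norm1 E d \<nu>"
    by auto
  have "0 \<le> real d ^ 2 * \<tau>" using \<tau> by simp
  from L2nu_mix_uniform[OF E zero L1 d this \<tau>(2)] obtain Gv' Ge'
    where L2: "in_L2nu n E d (\<lambda>i j x. (1 - real d ^ 2 * \<tau>) * 0) Gv' Ge'"
      and B: "lower_bounded n E d (real d ^ 2 * \<tau> / real d ^ 2) Gv' Ge'"
      and D2: "marg_dist1 n E d Gv Ge1 Gv' Ge' \<le> 2 * (real d ^ 2 * \<tau>) * (real (card E) + real n)"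
    by blast
  have "2 * (real d ^ 2 * \<tau>) * (real (card E) + real n)
      = 2 * (real (card E) + real n) * real d ^ 2 * \<tau>"
    by (simp add: algebra_simps)
  then have "marg_dist1 n E d Gv Ge Gv' Ge'
      \<le> 2 * slack_norm1 E d \<nu> + 2 * (real (card E) + real n) * real d ^ 2 * \<tau>"
    using marg_dist1_triangle[of n E d Gv Ge Gv' Ge' Gv Ge1] D1 D2 by linarith
  moreover have "in_L2 n E d Gv' Ge'" using L2 by (simp add: in_L2_def)
  moreover have "lower_bounded n E d \<tau> Gv' Ge'" using B d by simp
  ultimately show thesis using that by blast
qed

lemma L2_approx_in_L2nu:
  assumes G: "simple_graph n E" and \<nu>: "slack_vector E d \<nu>"
    and \<nu>_inf: "\<forall>(i,j)\<in>E. \<forall>x<d. \<bar>\<nu> i j x\<bar> \<le> 1 / (4 * real d) \<and> \<bar>\<nu> j i x\<bar> \<le> 1 / (4 * real d)"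
    and L: "in_L2 n E d Gv Ge" and d: "0 < d" and \<tau>: "0 \<le> \<tau>" "8 * real d ^ 2 * \<tau> \<le> 1"
  obtains Gv' Ge' where "in_L2nu n E d \<nu> Gv' Ge'" and "lower_bounded n E d \<tau> Gv' Ge'"
    and "marg_dist1 n E d Gv Ge Gv' Ge'
           \<le> 6 * real d * real (max_degree n E) * slack_norm1 E d \<nu>
              + 8 * (real (card E) + real n) * real d ^ 2 * \<tau>"
proof -
  have E: "E \<subseteq> {1..n} \<times> {1..n}" using G by (simp add: simple_graph_def)
  obtain Gv1 Ge1 where L1: "in_L2 n E d Gv1 Ge1"
    and above: "\<forall>(i,j)\<in>E. \<forall>x<d. 2 * \<bar>\<nu> i j x\<bar> \<le> Gv1 i x \<and> 2 * \<bar>\<nu> j i x\<bar> \<le> Gv1 j x"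
    and D1: "marg_dist1 n E d Gv Ge Gv1 Ge1 \<le> 4 * (1 + real (max_degree n E)) * slack_norm1 E d \<nu>"
    by (rule L2_lift_above_slack[OF G L \<nu>_inf])
  define l where "l = 4 * real d ^ 2 * \<tau>"
  have l: "0 \<le> l" "l \<le> 1 / 2" using \<tau> by (auto simp: l_def)
  obtain Gv' Ge' where L': "in_L2nu n E d \<nu> Gv' Ge'"
    and B: "lower_bounded n E d (l / real d ^ 2) Gv' Ge'"
    and D2: "marg_dist1 n E d Gv1 Ge1 Gv' Ge'
               \<le> 4 * slack_norm1 E d \<nu> + 2 * l * (real (card E) + real n)"
    by (rule L2_introduce_slack[OF E \<nu> L1 above d l])
  have "\<tau> \<le> l / real d ^ 2" using d \<tau> by (simp add: l_def)
  with B have "lower_bounded n E d \<tau> Gv' Ge'" by (rule lower_bounded_mono)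
  moreover have "marg_dist1 n E d Gv Ge Gv' Ge'
           \<le> 6 * real d * real (max_degree n E) * slack_norm1 E d \<nu>
              + 8 * (real (card E) + real n) * real d ^ 2 * \<tau>"
    using marg_dist1_triangle[of n E d Gv Ge Gv' Ge' Gv1 Ge1] D1 D2
      slack_norm1_degree_estimate[OF E \<nu>]
    by (simp add: l_def algebra_simps)
  ultimately show thesis using that L' by blast
qed

theorem lemma8:
  fixes n d :: nat and E :: "(nat \<times> nat) set" and \<tau> :: real
    and \<nu> :: "nat \<Rightarrow> nat \<Rightarrow> nat \<Rightarrow> real"
  assumes G: "simple_graph n E"
    and tau_pos: "0 < \<tau>" and tau_le: "\<tau> \<le> 1 / (8 * real d ^ 2)"
    and nu_slack: "slack_vector E d \<nu>"
    and nu_inf: "\<forall>(i,j)\<in>E. \<forall>x<d. \<bar>\<nu> i j x\<bar> \<le> 1 / (4 * real d) \<and> \<bar>\<nu> j i x\<bar> \<le> 1 / (4 * real d)"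
  shows
    "(\<forall>Gv Ge. in_L2nu n E d \<nu> Gv Ge \<longrightarrow>
        (\<exists>Gv' Ge'. in_L2 n E d Gv' Ge' \<and> lower_bounded n E d \<tau> Gv' Ge' \<and>
           marg_dist1 n E d Gv Ge Gv' Ge'
             \<le> 2 * slack_norm1 E d \<nu> + 2 * (real (card E) + real n) * real d ^ 2 * \<tau>))
     \<and>
     (\<forall>Gv Ge. in_L2 n E d Gv Ge \<longrightarrow>
        (\<exists>Gv' Ge'. in_L2nu n E d \<nu> Gv' Ge' \<and> lower_bounded n E d \<tau> Gv' Ge' \<and>
           marg_dist1 n E d Gv Ge Gv' Ge'
             \<le> 6 * real d * real (max_degree n E) * slack_norm1 E d \<nu>
                + 8 * (real (card E) + real n) * real d ^ 2 * \<tau>))"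
proof -
  \<comment> \<open>for d = 0 the hypothesis reads \<tau> \<le> 1 / 0 = 0\<close>
  have d: "0 < d" using tau_pos tau_le by (cases d) auto
  then have small: "8 * real d ^ 2 * \<tau> \<le> 1" using tau_le by (simp add: field_simps)
  then have "real d ^ 2 * \<tau> \<le> 1" using tau_pos by simp
  have E: "E \<subseteq> {1..n} \<times> {1..n}" using G by (simp add: simple_graph_def)
  show ?thesis
    using L2nu_approx_in_L2[OF E nu_slack _ d _ \<open>real d ^ 2 * \<tau> \<le> 1\<close>]
      L2_approx_in_L2nu[OF G nu_slack nu_inf _ d _ small] tau_pos
    by (metis less_imp_le)
qed

end
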